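(* Let $G=(V,E)$ be a computation graph with vertices $v_1,\dots,v_n$, let $M$ be the fast-memory size, and let $J^*_G$ be the minimum number of non-trivial I/Os over all valid evaluations of $G$. Let $\tilde L$ and $W^{(k)}$ be as defined in the context. Then $J^*_G$ is at least the optimal value of $$\min_{X\in\mathcal{O}_G}\ \max_{1\le k\le n}\ \left(\operatorname{tr}\!\left(X^T\tilde L X W^{(k)}\right) - 2kM\right).$$
   Context: A computation graph is a finite directed acyclic graph $G=(V,E)$. Each vertex is an operation producing a single element, and an edge $(u,v)$ means the result of $u$ is an operand of $v$. Sources are the inputs and sinks are the outputs. Execution model: a single processor has a fast memory holding at most $M$ elements and an unbounded slow memory. Every vertex is evaluated exactly once (no recomputation), in an order that is topological with respect to $G$. To evaluate $v$, all parents of $v$ must be in fast memory; a parent not present must be read from slow memory. The eviction policy is unconstrained, but a value that is evicted while still needed by a later vertex must first be written to slow memory. Only non-trivial I/O is counted. Inputs can be placed directly into fast memory at no cost, and outputs are reported immediately at no cost when computed. However, an input that is evicted while still needed must be written to slow memory. Each transfer of one element between fast and slow memory counts as one I/O. An evaluation order is encoded as an $n\times n$ permutation matrix $X$ with $X_{ij}=1$ iff vertex $v_i$ is evaluated at time step $j$. $\mathcal{O}_G$ is the set of such matrices corresponding to topological orders of $G$. $\tilde G$ is the weighted undirected graph on $V$ containing, for each directed edge $(u,v)\in E$, the undirected edge $\{u,v\}$ with weight $1/d_{out}(u)$, where $d_{out}$ is out-degree in $G$. $\tilde L=\tilde D-\tilde A$ is its Laplacian, with $\tilde A$ the weighted adjacency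 matrix and $\tilde D$ the diagonal weighted-degree matrix. For $1\le k\le n$, split the time steps $1,\dots,n$ into $k$ consecutive blocks: the first $n \bmod k$ blocks have $\lfloor n/k\rfloor+1$ elements and the remaining blocks have $\lfloor n/k\rfloor$ elements. Let $\hat W^{(k)}\in\{0,1\}^{n\times k}$ have $(\hat W^{(k)})_{tj}=1$ iff time step $t$ lies in block $j$, and set $W^{(k)}=\hat W^{(k)}(\hat W^{(k)})^T$. *)

theory Defs
  imports "Jordan_Normal_Form.Matrix" "HOL-Library.Extended_Real"
begin

text \<open>A computation graph on vertices v_1..v_n is represented with vertex set {0..<n}
  (vertex v_(i+1) is the number i) and a set E of directed edges (u,v), meaning that
  the result of u is an operand of v.\<close>

definition comp_graph :: "nat \<Rightarrow> (nat \<times> nat) set \<Rightarrow> bool" where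
  "comp_graph n E \<longleftrightarrow> E \<subseteq> {0..<n} \<times> {0..<n} \<and> acyclic E"

definition out_deg :: "(nat \<times> nat) set \<Rightarrow> nat \<Rightarrow> nat" where
  "out_deg E u = card {v. (u, v) \<in> E}"

datatype action =
    Compute nat
  | Read nat
  | Write nat
  | Evict nat

text \<open>State: (F, S, C) = (contents of fast memory, contents of slow memory,
  vertices already evaluated).  Inputs (sources) are evaluated by a Compute action
  with no parents, i.e. placed into fast memory for free; outputs are simply computed
  (reported for free) and may then be evicted for free.  A value that is evicted
  without having been written can never be brought back, since Read requires the value
  to be in slow memory and recomputation is forbidden.\<close>

type_synonym mstate = "nat set \<times> nat set \<times> nat set"

fun step :: "nat \<Rightarrow> (nat \<times> nat) set \<Rightarrow> action \<Rightarrow> mstate \<Rightarrow> mstate option" where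
  "step n E (Compute v) (F, S, C) =
     (if v < n \<and> v \<notin> C \<and> (\<forall>u. (u, v) \<in> E \<longrightarrow> u \<in> F)
      then Some (insert v F, S, insert v C) else None)"
| "step n E (Read u) (F, S, C) = (if u \<in> S then Some (insert u F, S, C) else None)"
| "step n E (Write u) (F, S, C) = (if u \<in> F then Some (F, insert u S, C) else None)"
| "step n E (Evict u) (F, S, C) = (if u \<in> F then Some (F - {u}, S, C) else None)"

fun run :: "nat \<Rightarrow> (nat \<times> nat) set \<Rightarrow> nat \<Rightarrow> action list \<Rightarrow> mstate \<Rightarrow> mstate option" where
  "run n E M [] st = Some st"
| "run n E M (a # as) st =
     (case step n E a st of
        None \<Rightarrow> None
      | Some (F, S, C) \<Rightarrow> if card F \<le> M then run n E M as (F, S, C) else None)"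

text \<open>A valid evaluation: starting from empty memories, all actions are legal, memory
  capacity is respected, and at the end every vertex has been evaluated (each exactly
  once, since Compute requires the vertex not to be evaluated yet).\<close>
definition valid_eval :: "nat \<Rightarrow> (nat \<times> nat) set \<Rightarrow> nat \<Rightarrow> action list \<Rightarrow> bool" where
  "valid_eval n E M as \<longleftrightarrow>
     (\<exists>F S. run n E M as ({}, {}, {}) = Some (F, S, {0..<n}))"

fun is_io :: "action \<Rightarrow> bool" where
  "is_io (Read _) = True"
| "is_io (Write _) = True"
| "is_io _ = False"

definition io_cost :: "action list \<Rightarrow> nat" where
  "io_cost as = length (filter is_io as)"

text \<open>J*_G : minimum number of non-trivial I/Os over all valid evaluations
  (infinity if there is none).\<close>
definition J_star :: "nat \<Rightarrow> (nat \<times> nat) set \<Rightarrow> nat \<Rightarrow> enat" where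
  "J_star n E M = (INF as \<in> {as. valid_eval n E M as}. enat (io_cost as))"

text \<open>Time steps 1..n are represented by 0..<n.  X_(ij) = 1 iff vertex i is evaluated at
  time step j.\<close>
definition O_G :: "nat \<Rightarrow> (nat \<times> nat) set \<Rightarrow> real mat set" where
  "O_G n E = {X. \<exists>\<sigma>. bij_betw \<sigma> {0..<n} {0..<n}
                  \<and> (\<forall>u v. (u, v) \<in> E \<longrightarrow> \<sigma> u < \<sigma> v)
                  \<and> X = mat n n (\<lambda>(i, j). if \<sigma> i = j then 1 else 0)}"

definition A_tilde :: "nat \<Rightarrow> (nat \<times> nat) set \<Rightarrow> real mat" where
  "A_tilde n E = mat n n (\<lambda>(u, v).
      (if (u, v) \<in> E then 1 / real (out_deg E u) else 0)
    + (if (v, u) \<in> E then 1 / real (out_deg E v) else 0))"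

definition D_tilde :: "nat \<Rightarrow> (nat \<times> nat) set \<Rightarrow> real mat" where
  "D_tilde n E = mat n n (\<lambda>(u, v).
      if u = v then (\<Sum>w<n. A_tilde n E $$ (u, w)) else 0)"

definition L_tilde :: "nat \<Rightarrow> (nat \<times> nat) set \<Rightarrow> real mat" where
  "L_tilde n E = D_tilde n E - A_tilde n E"

text \<open>Block j (0-based, j < k) consists of the time steps t (0-based) with
  block_start n k j \<le> t < block_start n k (j+1); the first n mod k blocks have
  n div k + 1 elements and the remaining ones n div k.\<close>
definition block_start :: "nat \<Rightarrow> nat \<Rightarrow> nat \<Rightarrow> nat" where
  "block_start n k j = j * (n div k) + min j (n mod k)"

definition W_hat :: "nat \<Rightarrow> nat \<Rightarrow> real mat" where
  "W_hat n k = mat n k (\<lambda>(t, j).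
      if block_start n k j \<le> t \<and> t < block_start n k (Suc j) then 1 else 0)"

definition W :: "nat \<Rightarrow> nat \<Rightarrow> real mat" where
  "W n k = W_hat n k * transpose_mat (W_hat n k)"

definition mat_trace :: "real mat \<Rightarrow> real" where
  "mat_trace A = (\<Sum>i<dim_row A. A $$ (i, i))"

end

theory Submission
  imports Defs
begin

text \<open>Fix a valid evaluation and let \<open>pos v\<close> be the time step at which it computes \<open>v\<close>. The
  permutation matrix \<open>X\<close> of \<open>pos\<close> lies in \<open>O_G\<close>, since an operand has to be in fast memory, hence
  already computed, when it is used. As \<open>W n k\<close> is the 0/1 indicator of lying in the same block,
  \<open>tr(X^T L X W)\<close> is twice the weight of the edges joining different blocks; the edges leaving a
  vertex have total weight at most 1, so this is at most twice the number of vertices with an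
  out-edge into a later block. Such a vertex is still needed when its block ends, so at that moment
  it is either in fast memory (at most \<open>M\<close> vertices at each of the \<open>k\<close> block ends) or it has been
  written to and read back from slow memory, which costs two I/Os.\<close>

section \<open>Runs of the execution model\<close>

fun eval_order :: "action list \<Rightarrow> nat list" where
  "eval_order [] = []"
| "eval_order (Compute v # as) = v # eval_order as"
| "eval_order (_ # as) = eval_order as"

lemma eval_order_append [simp]: "eval_order (xs @ ys) = eval_order xs @ eval_order ys"
  by (induction xs rule: eval_order.induct) auto

lemma set_eval_order: "set (eval_order as) = {v. Compute v \<in> set as}"
  by (induction as rule: eval_order.induct) auto

lemma run_append:
  "run n E M (xs @ ys) st = (case run n E M xs st of None \<Rightarrow> None | Some st' \<Rightarrow> run n E M ys st')"
  by (induction xs arbitrary: st) (auto split: option.splits prod.splits)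

lemma run_append_SomeE:
  assumes "run n E M (xs @ ys) st = Some st''"
  obtains F S C where "run n E M xs st = Some (F, S, C)" "run n E M ys (F, S, C) = Some st''"
  using assms by (auto simp: run_append split: option.splits)

lemma run_evaluated:
  assumes "run n E M xs (F, S, C) = Some (F', S', C')"
  shows "C' = C \<union> set (eval_order xs) \<and> distinct (eval_order xs) \<and> set (eval_order xs) \<inter> C = {}"
  using assms
proof (induction xs arbitrary: F S C)
  case (Cons a xs)
  then show ?case by (cases a) (auto split: if_splits dest!: Cons.IH)
qed simp

lemma run_fast_memory:
  assumes "run n E M xs (F, S, C) = Some (F', S', C')" "F \<union> S \<subseteq> C" "card F \<le> M"
  shows "F' \<union> S' \<subseteq> C' \<and> card F' \<le> M"
  using assms
proof (induction xs arbitrary: F S C)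
  case (Cons a xs)
  then show ?case by (cases a) (auto split: if_splits dest!: Cons.IH)
qed simp

lemma run_Read_if_new_in_fast:
  assumes "run n E M xs (F, S, C) = Some (F', S', C')" "u \<in> F'" "u \<notin> F" "u \<in> C"
  shows "Read u \<in> set xs"
  using assms
proof (induction xs arbitrary: F S C)
  case (Cons a xs)
  then show ?case by (cases a) (auto split: if_splits dest!: Cons.IH)
qed simp

lemma run_Write_if_Read:
  assumes "run n E M xs (F, S, C) = Some st'" "Read u \<in> set xs"
  shows "u \<in> S \<or> Write u \<in> set xs"
  using assms
proof (induction xs arbitrary: F S C)
  case (Cons a xs)
  then show ?case by (cases a) (auto split: if_splits dest!: Cons.IH)
qed simp

lemma run_Compute_parent_in_fast:
  assumes "run n E M (Compute v # ys) (F, S, C) = Some st'" "(u, v) \<in> E"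
  shows "u \<in> F"
  using assms by (auto split: if_splits)

lemma run_live_value_fast_or_spilled:
  assumes xs: "run n E M xs ({}, {}, {}) = Some (F, S, C)"
    and ys: "run n E M ys (F, S, C) = Some st'"
    and "u \<in> C" "(u, v) \<in> E" "Compute v \<in> set ys"
  shows "u \<in> F \<or> (Read u \<in> set (xs @ ys) \<and> Write u \<in> set (xs @ ys))"
proof (cases "u \<in> F")
  case False
  obtain p q where "ys = p @ Compute v # q"
    using split_list[OF \<open>Compute v \<in> set ys\<close>] by blast
  then obtain F1 S1 C1 where p: "run n E M p (F, S, C) = Some (F1, S1, C1)"
    and "run n E M (Compute v # q) (F1, S1, C1) = Some st'"
    using ys run_append_SomeE by metis
  then have "u \<in> F1"
    using run_Compute_parent_in_fast \<open>(u, v) \<in> E\<close> by metis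
  then have "Read u \<in> set p"
    using run_Read_if_new_in_fast[OF p] False \<open>u \<in> C\<close> by blast
  then have read: "Read u \<in> set (xs @ ys)"
    using \<open>ys = p @ Compute v # q\<close> by simp
  have "run n E M (xs @ ys) ({}, {}, {}) = Some st'"
    using xs ys by (simp add: run_append)
  then have "Write u \<in> set (xs @ ys)"
    using run_Write_if_Read read by blast
  with read show ?thesis by blast
qed simp

section \<open>Blocks of time steps\<close>

definition block_of :: "nat \<Rightarrow> nat \<Rightarrow> nat \<Rightarrow> nat" where
  "block_of n k t = (LEAST j. t < block_start n k (Suc j))"

lemma block_start_mono: "i \<le> j \<Longrightarrow> block_start n k i \<le> block_start n k j"
  unfolding block_start_def by (intro add_mono mult_le_mono1 min.mono) auto

lemma block_start_last:
  assumes "0 < k"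
  shows "block_start n k k = n"
proof -
  have "min k (n mod k) = n mod k"
    using assms by (simp add: less_imp_le)
  then show ?thesis
    by (simp add: block_start_def)
qed

lemma
  assumes "0 < k" "t < n"
  shows block_of_less: "block_of n k t < k"
    and block_start_block_of_le: "block_start n k (block_of n k t) \<le> t"
    and less_block_start_Suc_block_of: "t < block_start n k (Suc (block_of n k t))"
proof -
  have ex: "t < block_start n k (Suc (k - 1))"
    using assms block_start_last[of k n] by simp
  then have "block_of n k t \<le> k - 1"
    unfolding block_of_def by (rule Least_le)
  then show "block_of n k t < k"
    using assms(1) by simp
  show "t < block_start n k (Suc (block_of n k t))"
    unfolding block_of_def using ex by (rule LeastI)
  show "block_start n k (block_of n k t) \<le> t"
  proof (cases "block_of n k t")
    case (Suc j)
    then show ?thesis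
      using not_less_Least[of j "\<lambda>j. t < block_start n k (Suc j)"] unfolding block_of_def by simp
  qed (simp add: block_start_def)
qed

lemma block_of_eqI:
  assumes "block_start n k j \<le> t" "t < block_start n k (Suc j)"
  shows "block_of n k t = j"
  unfolding block_of_def
proof (rule Least_equality)
  fix j' assume j': "t < block_start n k (Suc j')"
  show "j \<le> j'"
  proof (rule ccontr)
    assume "\<not> j \<le> j'"
    then have "block_start n k (Suc j') \<le> block_start n k j"
      by (intro block_start_mono) simp
    with assms(1) j' show False
      by linarith
  qed
qed (fact assms(2))

lemma block_of_mono: "0 < k \<Longrightarrow> s \<le> t \<Longrightarrow> t < n \<Longrightarrow> block_of n k s \<le> block_of n k t"
  unfolding block_of_def[of n k s]
  using less_block_start_Suc_block_of[of k t n] by (intro Least_le) simp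

lemma block_boundary_between:
  assumes "0 < k" "s < t" "t < n" "block_of n k s \<noteq> block_of n k t"
  shows "s < block_start n k (Suc (block_of n k s))"
    and "block_start n k (Suc (block_of n k s)) \<le> t"
proof -
  show "s < block_start n k (Suc (block_of n k s))"
    using assms by (intro less_block_start_Suc_block_of) auto
  have "Suc (block_of n k s) \<le> block_of n k t"
    using assms block_of_mono[of k s t n] by simp
  then show "block_start n k (Suc (block_of n k s)) \<le> t"
    using block_start_mono block_start_block_of_le[OF assms(1,3)] order.trans by blast
qed

lemma W_index:
  assumes "0 < k" "s < n" "t < n"
  shows "W n k $$ (s, t) = (if block_of n k s = block_of n k t then 1 else 0)"
proof -
  have W_hat: "W_hat n k $$ (r, j) = (if block_of n k r = j then 1 else 0)" if "r < n" "j < k" for r j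
  proof -
    have "block_start n k j \<le> r \<and> r < block_start n k (Suc j) \<longleftrightarrow> block_of n k r = j"
      using block_of_eqI block_start_block_of_le[OF assms(1) \<open>r < n\<close>]
        less_block_start_Suc_block_of[OF assms(1) \<open>r < n\<close>] by blast
    then show ?thesis
      using that by (simp add: W_hat_def)
  qed
  have dims: "W_hat n k \<in> carrier_mat n k"
    by (simp add: W_hat_def)
  have "W n k $$ (s, t) = (\<Sum>j<k. W_hat n k $$ (s, j) * W_hat n k $$ (t, j))"
    using assms dims by (simp add: W_def scalar_prod_def lessThan_atLeast0)
  also have "\<dots> = (\<Sum>j<k. if block_of n k s = j then (if block_of n k t = j then 1 else 0) else 0)"
    using assms by (intro sum.cong) (simp_all add: W_hat)
  also have "\<dots> = (if block_of n k s = block_of n k t then 1 else 0)"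
    using block_of_less[OF assms(1,2)] by (simp add: sum.delta)
  finally show ?thesis .
qed

lemma W_carrier: "W n k \<in> carrier_mat n n"
  unfolding W_def by (rule mult_carrier_mat[of _ n k]) (simp_all add: W_hat_def)

section \<open>Permutation matrices and traces\<close>

definition perm_mat :: "nat \<Rightarrow> (nat \<Rightarrow> nat) \<Rightarrow> 'a :: semiring_1 mat" where
  "perm_mat n \<sigma> = mat n n (\<lambda>(i, j). if \<sigma> i = j then 1 else 0)"

lemma perm_mat_carrier [simp]: "perm_mat n \<sigma> \<in> carrier_mat n n"
  by (simp add: perm_mat_def)

lemma perm_mat_mult_index:
  fixes A :: "'a :: semiring_1 mat"
  assumes "A \<in> carrier_mat n m" "i < n" "j < m" "\<sigma> i < n"
  shows "(perm_mat n \<sigma> * A) $$ (i, j) = A $$ (\<sigma> i, j)"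
proof -
  have "(perm_mat n \<sigma> * A) $$ (i, j) = (\<Sum>l<n. (if \<sigma> i = l then 1 else 0) * A $$ (l, j))"
    using assms by (simp add: perm_mat_def scalar_prod_def lessThan_atLeast0)
  also have "\<dots> = A $$ (\<sigma> i, j)"
    using assms(4) by (simp add: if_distrib[of "\<lambda>x. x * _"] sum.delta cong: if_cong)
  finally show ?thesis .
qed

lemma mult_transpose_perm_mat_index:
  fixes A :: "'a :: semiring_1 mat"
  assumes "A \<in> carrier_mat m n" "i < m" "j < n" "\<sigma> j < n"
  shows "(A * transpose_mat (perm_mat n \<sigma>)) $$ (i, j) = A $$ (i, \<sigma> j)"
proof -
  have "(A * transpose_mat (perm_mat n \<sigma>)) $$ (i, j) = (\<Sum>l<n. A $$ (i, l) * (if \<sigma> j = l then 1 else 0))"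
    using assms by (simp add: perm_mat_def scalar_prod_def lessThan_atLeast0)
  also have "\<dots> = A $$ (i, \<sigma> j)"
    using assms(4) by (simp add: if_distrib[of "\<lambda>x. _ * x"] sum.delta cong: if_cong)
  finally show ?thesis .
qed

lemma mat_trace_mult:
  assumes "A \<in> carrier_mat n m" "B \<in> carrier_mat m n"
  shows "mat_trace (A * B) = (\<Sum>i<n. \<Sum>j<m. A $$ (i, j) * B $$ (j, i))"
  using assms by (simp add: mat_trace_def scalar_prod_def lessThan_atLeast0)

lemma mat_trace_mult_commute:
  assumes "A \<in> carrier_mat n m" "B \<in> carrier_mat m n"
  shows "mat_trace (A * B) = mat_trace (B * A)"
  using assms by (simp add: mat_trace_mult sum.swap[of _ "{..<n}"] mult.commute)

lemma mat_trace_perm_conj: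
  assumes L: "L \<in> carrier_mat n n" and B: "B \<in> carrier_mat n n" and \<sigma>: "\<And>i. i < n \<Longrightarrow> \<sigma> i < n"
  shows "mat_trace (transpose_mat (perm_mat n \<sigma>) * L * perm_mat n \<sigma> * B)
    = (\<Sum>i<n. \<Sum>j<n. L $$ (i, j) * B $$ (\<sigma> j, \<sigma> i))"
proof -
  let ?X = "perm_mat n \<sigma> :: real mat"
  have conj: "(?X * B * transpose_mat ?X) $$ (j, i) = B $$ (\<sigma> j, \<sigma> i)" if "i < n" "j < n" for i j
  proof -
    have "?X * B \<in> carrier_mat n n"
      using perm_mat_carrier B by (rule mult_carrier_mat)
    then have "(?X * B * transpose_mat ?X) $$ (j, i) = (?X * B) $$ (j, \<sigma> i)"
      using that \<sigma> by (intro mult_transpose_perm_mat_index) auto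
    also have "\<dots> = B $$ (\<sigma> j, \<sigma> i)"
      using that \<sigma> B by (intro perm_mat_mult_index) auto
    finally show ?thesis .
  qed
  have X: "?X \<in> carrier_mat n n" and XT: "transpose_mat ?X \<in> carrier_mat n n"
    by simp_all
  have LX: "L * ?X \<in> carrier_mat n n"
    using L X by (rule mult_carrier_mat)
  have XB: "?X * B \<in> carrier_mat n n"
    using X B by (rule mult_carrier_mat)
  have "transpose_mat ?X * L * ?X * B = transpose_mat ?X * (L * ?X * B)"
    using XT L X B LX by (simp add: assoc_mult_mat[of _ n n _ n _ n])
  then have "mat_trace (transpose_mat ?X * L * ?X * B) = mat_trace (L * ?X * B * transpose_mat ?X)"
    using XT LX B by (simp add: mat_trace_mult_commute[of _ n n] mult_carrier_mat[of _ n n])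
  also have "L * ?X * B * transpose_mat ?X = L * (?X * B * transpose_mat ?X)"
    using L X B XB XT by (simp add: assoc_mult_mat[of _ n n _ n _ n])
  also have "mat_trace \<dots> = (\<Sum>i<n. \<Sum>j<n. L $$ (i, j) * B $$ (\<sigma> j, \<sigma> i))"
    using L XB XT by (simp add: mat_trace_mult[of _ n n] mult_carrier_mat[of _ n n] conj)
  finally show ?thesis .
qed

section \<open>The weighted Laplacian\<close>

definition edge_weight :: "(nat \<times> nat) set \<Rightarrow> nat \<Rightarrow> nat \<Rightarrow> real" where
  "edge_weight E u v = (if (u, v) \<in> E then 1 / real (out_deg E u) else 0)"

lemma edge_weight_nonneg: "0 \<le> edge_weight E u v"
  by (simp add: edge_weight_def)

lemma sum_edge_weight_le_1:
  assumes "E \<subseteq> {0..<n} \<times> {0..<n}"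
  shows "(\<Sum>v<n. edge_weight E u v) \<le> 1"
proof -
  have succs: "{v. (u, v) \<in> E} = {v \<in> {..<n}. (u, v) \<in> E}"
    using assms by auto
  have "(\<Sum>v<n. edge_weight E u v) = (\<Sum>v\<in>{v \<in> {..<n}. (u, v) \<in> E}. 1 / real (out_deg E u))"
    unfolding edge_weight_def by (rule sum.inter_filter[symmetric]) simp
  also have "\<dots> = real (out_deg E u) * (1 / real (out_deg E u))"
    by (simp add: out_deg_def succs)
  also have "\<dots> \<le> 1"
    by simp
  finally show ?thesis .
qed

lemma L_tilde_carrier: "L_tilde n E \<in> carrier_mat n n"
  unfolding L_tilde_def D_tilde_def A_tilde_def by (rule minus_carrier_mat) simp

lemma L_tilde_index:
  assumes "i < n" "j < n"
  shows "L_tilde n E $$ (i, j) =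
    (if i = j then (\<Sum>w<n. edge_weight E i w + edge_weight E w i) else 0)
    - (edge_weight E i j + edge_weight E j i)"
  using assms by (simp add: L_tilde_def D_tilde_def A_tilde_def edge_weight_def)

lemma sum_L_tilde_same_label:
  "(\<Sum>i<n. \<Sum>j<n. L_tilde n E $$ (i, j) * (if f i = f j then 1 else 0))
    = 2 * (\<Sum>i<n. \<Sum>j<n. if f i = f j then 0 else edge_weight E i j)"
proof -
  let ?a = "\<lambda>i j. edge_weight E i j + edge_weight E j i"
  have row: "(\<Sum>j<n. L_tilde n E $$ (i, j) * (if f i = f j then 1 else 0))
      = (\<Sum>j<n. if f i = f j then 0 else ?a i j)" if "i < n" for i
  proof -
    have "(\<Sum>j<n. L_tilde n E $$ (i, j) * (if f i = f j then 1 else 0))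
        = (\<Sum>j<n. (if i = j then (\<Sum>w<n. ?a i w) else 0) - (if f i = f j then ?a i j else 0))"
      using that by (intro sum.cong) (auto simp: L_tilde_index)
    also have "\<dots> = (\<Sum>w<n. ?a i w) - (\<Sum>j<n. if f i = f j then ?a i j else 0)"
      using that by (simp add: sum_subtractf)
    also have "\<dots> = (\<Sum>j<n. if f i = f j then 0 else ?a i j)"
      by (simp add: sum_subtractf[symmetric] if_distrib[of "\<lambda>x. _ - x"] cong: if_cong)
    finally show ?thesis .
  qed
  have "(\<Sum>i<n. \<Sum>j<n. L_tilde n E $$ (i, j) * (if f i = f j then 1 else 0))
      = (\<Sum>i<n. \<Sum>j<n. if f i = f j then 0 else ?a i j)"
    by (simp add: row)
  also have "\<dots> = (\<Sum>i<n. \<Sum>j<n. if f i = f j then 0 else edge_weight E i j)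
      + (\<Sum>i<n. \<Sum>j<n. if f i = f j then 0 else edge_weight E j i)"
    by (simp add: if_distrib[of "\<lambda>x. x + _"] sum.distrib[symmetric] cong: if_cong)
  also have "(\<Sum>i<n. \<Sum>j<n. if f i = f j then 0 else edge_weight E j i)
      = (\<Sum>i<n. \<Sum>j<n. if f i = f j then 0 else edge_weight E i j)"
    by (subst sum.swap) (simp add: eq_commute)
  finally show ?thesis
    by simp
qed

lemma cut_weight_le_card:
  assumes "E \<subseteq> {0..<n} \<times> {0..<n}"
  shows "(\<Sum>i<n. \<Sum>j<n. if f i = f j then 0 else edge_weight E i j)
    \<le> real (card {i. i < n \<and> (\<exists>j. (i, j) \<in> E \<and> f i \<noteq> f j)})"
proof -
  let ?P = "{i. i < n \<and> (\<exists>j. (i, j) \<in> E \<and> f i \<noteq> f j)}"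
  have "(\<Sum>j<n. if f i = f j then 0 else edge_weight E i j) \<le> (if i \<in> ?P then 1 else 0)"
    if "i < n" for i
  proof (cases "i \<in> ?P")
    case True
    have "(\<Sum>j<n. if f i = f j then 0 else edge_weight E i j) \<le> (\<Sum>j<n. edge_weight E i j)"
      by (intro sum_mono) (simp add: edge_weight_nonneg)
    also have "\<dots> \<le> 1"
      using assms by (rule sum_edge_weight_le_1)
    finally show ?thesis
      using True by simp
  next
    case False
    then have "(if f i = f j then 0 else edge_weight E i j) = 0" for j
      using that by (auto simp: edge_weight_def)
    with False show ?thesis
      by simp
  qed
  then have "(\<Sum>i<n. \<Sum>j<n. if f i = f j then 0 else edge_weight E i j) \<le> (\<Sum>i<n. if i \<in> ?P then 1 else 0)"
    by (intro sum_mono) simp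
  also have "\<dots> = real (card ?P)"
    by (simp add: sum.If_cases Int_def)
  finally show ?thesis .
qed

section \<open>The I/O cost of a single evaluation\<close>

locale valid_evaluation =
  fixes n :: nat and E :: "(nat \<times> nat) set" and M :: nat and as :: "action list"
  assumes comp_graph: "comp_graph n E" and valid: "valid_eval n E M as"
begin

definition pos :: "nat \<Rightarrow> nat" where
  "pos = inv_into {..<n} ((!) (eval_order as))"

definition spilled :: "nat set" where
  "spilled = {u. Read u \<in> set as \<and> Write u \<in> set as}"

definition block_crossing :: "nat \<Rightarrow> nat set" where
  "block_crossing k = {u. u < n \<and> (\<exists>v. (u, v) \<in> E \<and> block_of n k (pos u) \<noteq> block_of n k (pos v))}"

lemma edges_within: "E \<subseteq> {0..<n} \<times> {0..<n}"
  using comp_graph by (simp add: comp_graph_def)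

lemma final_run:
  obtains F S where "run n E M as ({}, {}, {}) = Some (F, S, {0..<n})"
  using valid by (auto simp: valid_eval_def)

lemma eval_order_permutation:
  shows distinct_eval_order: "distinct (eval_order as)"
    and set_eval_order_eq: "set (eval_order as) = {0..<n}"
    and length_eval_order: "length (eval_order as) = n"
proof -
  obtain F S where "run n E M as ({}, {}, {}) = Some (F, S, {0..<n})"
    by (rule final_run)
  from run_evaluated[OF this] show "distinct (eval_order as)" "set (eval_order as) = {0..<n}"
    by simp_all
  then show "length (eval_order as) = n"
    using distinct_card by fastforce
qed

lemma bij_betw_nth_eval_order: "bij_betw ((!) (eval_order as)) {..<n} {0..<n}"
  by (rule bij_betw_nth) (simp_all add: eval_order_permutation)

lemma bij_betw_pos: "bij_betw pos {0..<n} {0..<n}"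
  unfolding pos_def using bij_betw_inv_into[OF bij_betw_nth_eval_order] by (simp add: lessThan_atLeast0)

lemma pos_less: "v < n \<Longrightarrow> pos v < n"
  using bij_betw_pos by (auto dest: bij_betwE)

lemma eval_order_pos: "v < n \<Longrightarrow> eval_order as ! pos v = v"
  unfolding pos_def using bij_betw_nth_eval_order by (simp add: bij_betw_def f_inv_into_f)

lemma pos_eval_order: "i < n \<Longrightarrow> pos (eval_order as ! i) = i"
  unfolding pos_def using bij_betw_nth_eval_order by (simp add: bij_betw_def inv_into_f_f)

lemma mem_take_eval_order_iff:
  assumes "v < n"
  shows "v \<in> set (take c (eval_order as)) \<longleftrightarrow> pos v < c"
proof
  assume "v \<in> set (take c (eval_order as))"
  then obtain i where "i < c" "i < n" "eval_order as ! i = v"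
    by (auto simp: in_set_conv_nth length_eval_order)
  then show "pos v < c"
    using pos_eval_order by auto
next
  assume "pos v < c"
  then show "v \<in> set (take c (eval_order as))"
    using eval_order_pos[OF assms] pos_less[OF assms]
    by (auto simp: in_set_conv_nth length_eval_order intro!: exI[of _ "pos v"])
qed

lemma Compute_mem_actions:
  assumes "v < n"
  shows "Compute v \<in> set as"
proof -
  have "v \<in> set (eval_order as)"
    using assms by (simp add: set_eval_order_eq)
  then show ?thesis
    by (simp add: set_eval_order)
qed

lemma split_at_Compute:
  assumes "v < n"
  obtains xs ys where "as = xs @ Compute v # ys"
    and "eval_order xs = take (pos v) (eval_order as)"
proof -
  obtain xs ys where split: "as = xs @ Compute v # ys"
    using split_list[OF Compute_mem_actions[OF assms]] by blast
  then have order: "eval_order as = eval_order xs @ v # eval_order ys"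
    by simp
  then have "length (eval_order xs) < n" "eval_order as ! length (eval_order xs) = v"
    using length_eval_order by auto
  then have "pos v = length (eval_order xs)"
    using pos_eval_order by metis
  then have "eval_order xs = take (pos v) (eval_order as)"
    using order by simp
  with split show ?thesis
    by (rule that)
qed

lemma prefix_run:
  assumes "as = xs @ ys"
  obtains F S st' where "run n E M xs ({}, {}, {}) = Some (F, S, set (eval_order xs))"
    and "run n E M ys (F, S, set (eval_order xs)) = Some st'"
    and "F \<subseteq> set (eval_order xs)" and "card F \<le> M"
proof -
  obtain F' S' where "run n E M as ({}, {}, {}) = Some (F', S', {0..<n})"
    by (rule final_run)
  then obtain F S C where xs: "run n E M xs ({}, {}, {}) = Some (F, S, C)"
    and ys: "run n E M ys (F, S, C) = Some (F', S', {0..<n})"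
    unfolding assms by (rule run_append_SomeE)
  have "C = set (eval_order xs)"
    using run_evaluated[OF xs] by simp
  moreover have "F \<subseteq> C" "card F \<le> M"
    using run_fast_memory[OF xs] by simp_all
  ultimately show ?thesis
    using that xs ys by blast
qed

lemma pos_less_pos_if_edge:
  assumes "(u, v) \<in> E"
  shows "pos u < pos v"
proof -
  have uv: "u < n" "v < n"
    using assms edges_within by auto
  obtain xs ys where split: "as = xs @ Compute v # ys"
    and prefix: "eval_order xs = take (pos v) (eval_order as)"
    by (rule split_at_Compute[OF uv(2)])
  obtain F S st' where "run n E M xs ({}, {}, {}) = Some (F, S, set (eval_order xs))"
    and run_v: "run n E M (Compute v # ys) (F, S, set (eval_order xs)) = Some st'"
    and "F \<subseteq> set (eval_order xs)" and "card F \<le> M"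
    by (rule prefix_run[OF split])
  moreover have "u \<in> F"
    using run_v assms by (rule run_Compute_parent_in_fast)
  ultimately have "u \<in> set (eval_order xs)"
    by blast
  then show ?thesis
    using prefix mem_take_eval_order_iff[OF uv(1)] by simp
qed

lemma perm_mat_pos_mem_O_G: "perm_mat n pos \<in> O_G n E"
  unfolding O_G_def perm_mat_def using bij_betw_pos pos_less_pos_if_edge
  by (intro CollectI exI[of _ pos]) simp

lemma finite_spilled: "finite spilled"
proof -
  have "spilled \<subseteq> Read -` set as"
    by (auto simp: spilled_def)
  moreover have "finite (Read -` set as)"
    by (rule finite_vimageI) (auto simp: inj_def)
  ultimately show ?thesis
    by (rule finite_subset)
qed

lemma two_card_spilled_le_io_cost: "2 * card spilled \<le> io_cost as"
proof -
  have "card (Read ` spilled \<union> Write ` spilled) = card (Read ` spilled) + card (Write ` spilled)"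
    using finite_spilled by (intro card_Un_disjoint) auto
  also have "\<dots> = 2 * card spilled"
    by (simp add: card_image inj_on_def)
  finally have "2 * card spilled = card (Read ` spilled \<union> Write ` spilled)"
    by simp
  also have "\<dots> \<le> card (set (filter is_io as))"
    by (intro card_mono) (auto simp: spilled_def)
  also have "\<dots> \<le> io_cost as"
    unfolding io_cost_def by (rule card_length)
  finally show ?thesis .
qed

lemma cut_live_values:
  assumes "c < n"
  obtains F where "finite F" "card F \<le> M"
    and "\<And>u v. (u, v) \<in> E \<Longrightarrow> pos u < c \<Longrightarrow> c \<le> pos v \<Longrightarrow> u \<in> F \<union> spilled"
proof -
  define w where "w = eval_order as ! c"
  have "w < n" "pos w = c"
    using assms nth_mem[of c "eval_order as"] pos_eval_order
    by (simp_all add: w_def length_eval_order set_eval_order_eq)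
  then obtain xs ys where split: "as = xs @ Compute w # ys"
    and prefix: "eval_order xs = take c (eval_order as)"
    using split_at_Compute by metis
  obtain F S st' where xs: "run n E M xs ({}, {}, {}) = Some (F, S, set (eval_order xs))"
    and ys: "run n E M (Compute w # ys) (F, S, set (eval_order xs)) = Some st'"
    and F: "F \<subseteq> set (eval_order xs)" "card F \<le> M"
    by (rule prefix_run[OF split])
  have "u \<in> F \<union> spilled" if "(u, v) \<in> E" "pos u < c" "c \<le> pos v" for u v
  proof -
    have uv: "u < n" "v < n"
      using that(1) edges_within by auto
    have "u \<in> set (eval_order xs)"
      using prefix mem_take_eval_order_iff[OF uv(1)] that(2) by simp
    moreover have "Compute v \<in> set (Compute w # ys)"
    proof -
      have "Compute v \<in> set as"
        using uv(2) by (rule Compute_mem_actions)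
      moreover have "v \<notin> set (eval_order xs)"
        using prefix mem_take_eval_order_iff[OF uv(2)] that(3) by simp
      ultimately show ?thesis
        unfolding split by (auto simp: set_eval_order)
    qed
    ultimately have "u \<in> F \<or> (Read u \<in> set as \<and> Write u \<in> set as)"
      using run_live_value_fast_or_spilled[OF xs ys _ that(1)] unfolding split by blast
    then show ?thesis
      by (auto simp: spilled_def)
  qed
  moreover have "finite F"
    using F(1) by (rule finite_subset) simp
  ultimately show ?thesis
    using that F(2) by blast
qed

lemma live_sets:
  "\<exists>live. \<forall>c\<in>{..<n}. finite (live c) \<and> card (live c) \<le> M
    \<and> (\<forall>u v. (u, v) \<in> E \<longrightarrow> pos u < c \<longrightarrow> c \<le> pos v \<longrightarrow> u \<in> live c \<union> spilled)"
proof -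
  have "\<forall>c\<in>{..<n}. \<exists>F. finite F \<and> card F \<le> M
      \<and> (\<forall>u v. (u, v) \<in> E \<longrightarrow> pos u < c \<longrightarrow> c \<le> pos v \<longrightarrow> u \<in> F \<union> spilled)"
  proof
    fix c assume "c \<in> {..<n}"
    then obtain F where "finite F" "card F \<le> M"
      and "\<And>u v. (u, v) \<in> E \<Longrightarrow> pos u < c \<Longrightarrow> c \<le> pos v \<Longrightarrow> u \<in> F \<union> spilled"
      using cut_live_values by blast
    then show "\<exists>F. finite F \<and> card F \<le> M
      \<and> (\<forall>u v. (u, v) \<in> E \<longrightarrow> pos u < c \<longrightarrow> c \<le> pos v \<longrightarrow> u \<in> F \<union> spilled)"
      by blast
  qed
  then show ?thesis
    by (rule bchoice)
qed

lemma block_crossing_subset_live: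
  assumes "0 < k"
    and live: "\<And>c u v. c < n \<Longrightarrow> (u, v) \<in> E \<Longrightarrow> pos u < c \<Longrightarrow> c \<le> pos v \<Longrightarrow> u \<in> live c \<union> spilled"
  shows "block_crossing k
    \<subseteq> (\<Union>j\<in>{j. j < k \<and> block_start n k (Suc j) < n}. live (block_start n k (Suc j))) \<union> spilled"
proof
  fix u assume "u \<in> block_crossing k"
  then obtain v where e: "(u, v) \<in> E" and differ: "block_of n k (pos u) \<noteq> block_of n k (pos v)"
    by (auto simp: block_crossing_def)
  define j where "j = block_of n k (pos u)"
  have uv: "u < n" "v < n"
    using e edges_within by auto
  have "pos u < block_start n k (Suc j)" "block_start n k (Suc j) \<le> pos v"
    using block_boundary_between[OF assms(1) pos_less_pos_if_edge[OF e] pos_less[OF uv(2)] differ]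
    unfolding j_def by simp_all
  moreover have "j < k" "block_start n k (Suc j) < n"
    using block_of_less[OF assms(1) pos_less[OF uv(1)]] \<open>block_start n k (Suc j) \<le> pos v\<close>
      pos_less[OF uv(2)]
    unfolding j_def by simp_all
  ultimately show "u \<in> (\<Union>j\<in>{j. j < k \<and> block_start n k (Suc j) < n}. live (block_start n k (Suc j)))
      \<union> spilled"
    using live[OF _ e] by blast
qed

lemma card_block_crossing_le:
  assumes "0 < k"
  shows "card (block_crossing k) \<le> k * M + card spilled"
proof -
  obtain live where live_c: "\<forall>c\<in>{..<n}. finite (live c) \<and> card (live c) \<le> M
    \<and> (\<forall>u v. (u, v) \<in> E \<longrightarrow> pos u < c \<longrightarrow> c \<le> pos v \<longrightarrow> u \<in> live c \<union> spilled)"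
    using live_sets by blast
  then have live: "\<And>c u v. c < n \<Longrightarrow> (u, v) \<in> E \<Longrightarrow> pos u < c \<Longrightarrow> c \<le> pos v \<Longrightarrow> u \<in> live c \<union> spilled"
    by blast
  let ?J = "{j. j < k \<and> block_start n k (Suc j) < n}"
  let ?U = "\<Union>j\<in>?J. live (block_start n k (Suc j))"
  have "finite (?U \<union> spilled)"
    using live_c finite_spilled by auto
  then have "card (block_crossing k) \<le> card (?U \<union> spilled)"
    using block_crossing_subset_live[OF assms live] by (rule card_mono)
  also have "\<dots> \<le> card ?U + card spilled"
    by (rule card_Un_le)
  also have "card ?U \<le> (\<Sum>j\<in>?J. card (live (block_start n k (Suc j))))"
    by (rule card_UN_le) simp
  also have "\<dots> \<le> card ?J * M"
    using live_c sum_bounded_above[of ?J "\<lambda>j. card (live (block_start n k (Suc j)))" M] by simp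
  also have "\<dots> \<le> k * M"
    using card_mono[of "{..<k}" ?J] by (simp add: subset_iff)
  finally show ?thesis
    by simp
qed

lemma trace_le_card_block_crossing:
  assumes "0 < k"
  shows "mat_trace (transpose_mat (perm_mat n pos) * L_tilde n E * perm_mat n pos * W n k)
    \<le> 2 * real (card (block_crossing k))"
proof -
  let ?f = "\<lambda>i. block_of n k (pos i)"
  have "mat_trace (transpose_mat (perm_mat n pos) * L_tilde n E * perm_mat n pos * W n k)
      = (\<Sum>i<n. \<Sum>j<n. L_tilde n E $$ (i, j) * W n k $$ (pos j, pos i))"
    using L_tilde_carrier W_carrier pos_less by (rule mat_trace_perm_conj)
  also have "\<dots> = (\<Sum>i<n. \<Sum>j<n. L_tilde n E $$ (i, j) * (if ?f i = ?f j then 1 else 0))"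
    using W_index[OF assms pos_less pos_less] by (intro sum.cong refl) simp
  also have "\<dots> = 2 * (\<Sum>i<n. \<Sum>j<n. if ?f i = ?f j then 0 else edge_weight E i j)"
    by (rule sum_L_tilde_same_label)
  also have "\<dots> \<le> 2 * real (card (block_crossing k))"
    using cut_weight_le_card[OF edges_within, of ?f] unfolding block_crossing_def by linarith
  finally show ?thesis .
qed

lemma objective_le_io_cost:
  assumes "k \<in> {1..n}"
  shows "mat_trace (transpose_mat (perm_mat n pos) * L_tilde n E * perm_mat n pos * W n k)
    - 2 * real k * real M \<le> real (io_cost as)"
proof -
  have "0 < k"
    using assms by simp
  have "2 * card (block_crossing k) \<le> 2 * (k * M) + io_cost as"
    using card_block_crossing_le[OF \<open>0 < k\<close>] two_card_spilled_le_io_cost by linarith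
  then have "real (2 * card (block_crossing k)) \<le> real (2 * (k * M) + io_cost as)"
    by (simp only: of_nat_le_iff)
  then show ?thesis
    using trace_le_card_block_crossing[OF \<open>0 < k\<close>] by simp
qed

end

lemma finite_O_G: "finite (O_G n E)"
proof -
  have "O_G n E \<subseteq> perm_mat n ` ({0..<n} \<rightarrow>\<^sub>E {0..<n})"
  proof
    fix X assume "X \<in> O_G n E"
    then obtain \<sigma> where \<sigma>: "bij_betw \<sigma> {0..<n} {0..<n}" and X: "X = perm_mat n \<sigma>"
      by (auto simp: O_G_def perm_mat_def)
    have "X = perm_mat n (restrict \<sigma> {0..<n})"
      unfolding X perm_mat_def by (rule eq_matI) auto
    moreover have "restrict \<sigma> {0..<n} \<in> {0..<n} \<rightarrow>\<^sub>E {0..<n}"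
      using \<sigma> by (auto simp: bij_betw_def)
    ultimately show "X \<in> perm_mat n ` ({0..<n} \<rightarrow>\<^sub>E {0..<n})"
      by blast
  qed
  then show ?thesis
    by (rule finite_subset) (intro finite_imageI finite_PiE; simp)
qed

lemma ereal_le_INF_enat:
  assumes "\<And>x. x \<in> A \<Longrightarrow> r \<le> real (f x)"
  shows "ereal r \<le> ereal_of_enat (INF x\<in>A. enat (f x))"
proof (cases "A = {}")
  case False
  then obtain x where "x \<in> A"
    by blast
  then have "(INF x\<in>A. enat (f x)) \<in> (\<lambda>x. enat (f x)) ` A"
    by (rule wellorder_InfI[OF imageI])
  then show ?thesis
    using assms by auto
qed (simp add: top_enat_def)

theorem theorem4p3:
  fixes n M :: nat and E :: "(nat \<times> nat) set"
  assumes "comp_graph n E" and "0 < n"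
  shows "ereal_of_enat (J_star n E M) \<ge>
    ereal (Min ((\<lambda>X. Max ((\<lambda>k. mat_trace (transpose_mat X * L_tilde n E * X * W n k)
                                   - 2 * real k * real M) ` {1..n})) ` O_G n E))"
  unfolding J_star_def
proof (rule ereal_le_INF_enat)
  fix as assume "as \<in> {as. valid_eval n E M as}"
  then interpret valid_evaluation n E M as
    using assms(1) by unfold_locales simp_all
  let ?objective = "\<lambda>X. Max ((\<lambda>k. mat_trace (transpose_mat X * L_tilde n E * X * W n k)
                                   - 2 * real k * real M) ` {1..n})"
  have "Min (?objective ` O_G n E) \<le> ?objective (perm_mat n pos)"
    using finite_O_G perm_mat_pos_mem_O_G by simp
  also have "\<dots> \<le> real (io_cost as)"
    using objective_le_io_cost assms(2) by simp
  finally show "Min (?objective ` O_G n E) \<le> real (io_cost as)" .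
qed

end
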